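(* Let $k,s\in\mathbb{R}$ with $0\le s\le 2k$ and $|k-s|<1$. Then for every sufficiently small $\eta>0$ there is a constant $C$ such that for all functions $u,w$ on $\mathbb{T}_x\times\mathbb{R}_t$, $$\|u\bar w\|_{H^{-1/2+\eta}_tH^s_x}\le C\|u\|_{X^{k,1/2+\eta}_{per}}\|w\|_{X^{k,1/2+\eta}_{per}}.$$
   Context: $\widehat f(n,\tau)$ is the Fourier transform (Fourier coefficients in $x\in\mathbb{T}$, Fourier transform in $t$); $\langle x\rangle=1+|x|$. $\|f\|_{X^{s,b}_{per}}=\big(\sum_{n\in\mathbb{Z}}\int_{\mathbb{R}}\langle n\rangle^{2s}\langle\tau+n^2\rangle^{2b}|\widehat f(n,\tau)|^2d\tau\big)^{1/2}$ and $\|f\|_{H^b_tH^s_x}=\big(\sum_{n}\int\langle n\rangle^{2s}\langle\tau\rangle^{2b}|\widehat f(n,\tau)|^2d\tau\big)^{1/2}$. (The paper's exponents $-1/2+$, $1/2+$ are interpreted as $-1/2+\eta$, $1/2+\eta$.) *)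

theory Defs
  imports "HOL-Analysis.Analysis"
begin

text \<open>Functions u on T_x x R_t are represented by their space-time Fourier transform
  uh :: int => real => complex, uh n tau = \<widehat>u(n,tau).\<close>

definition jb :: "real \<Rightarrow> real" where
  "jb x = 1 + \<bar>x\<bar>"

definition Xper_sq :: "real \<Rightarrow> real \<Rightarrow> (int \<Rightarrow> real \<Rightarrow> complex) \<Rightarrow> ennreal" where
  "Xper_sq s b F = nn_integral (count_space UNIV) (\<lambda>n. nn_integral lborel (\<lambda>\<tau>. ennreal (jb (real_of_int n) powr (2 * s)
        * jb (\<tau> + (real_of_int n)^2) powr (2 * b) * (cmod (F n \<tau>))^2)))"

definition HH_sq :: "real \<Rightarrow> real \<Rightarrow> (int \<Rightarrow> real \<Rightarrow> complex) \<Rightarrow> ennreal" where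
  "HH_sq b s F = nn_integral (count_space UNIV) (\<lambda>n. nn_integral lborel (\<lambda>\<tau>. ennreal (jb (real_of_int n) powr (2 * s)
        * jb \<tau> powr (2 * b) * (cmod (F n \<tau>))^2)))"

text \<open>Fourier transform of the product u * conj w, in terms of uh and wh
  (up to the normalisation constant (2 pi)^(-2) of the convolution, which is absorbed
  into the constant C): conj w has transform (n,tau) |-> conj (wh (-n) (-tau)).\<close>
definition prod_conj_hat :: "(int \<Rightarrow> real \<Rightarrow> complex) \<Rightarrow> (int \<Rightarrow> real \<Rightarrow> complex)
    \<Rightarrow> int \<Rightarrow> real \<Rightarrow> complex" where
  "prod_conj_hat F G n \<tau> = (\<Sum>\<^sub>\<infinity> m::int. \<integral> \<sigma>. F (n - m) (\<tau> - \<sigma>) * cnj (G (- m) (- \<sigma>)) \<partial>lborel)"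

end

theory Submission
  imports Defs
begin

text \<open>Write \<open>\<langle>x\<rangle> = 1 + \<bar>x\<bar>\<close>. The transform of \<open>u\<close> times the conjugate of \<open>w\<close> is bounded by the
  correlation \<open>\<integral> \<bar>\<widehat>u(x + y)\<bar> \<bar>\<widehat>w(y)\<bar> dy\<close> over \<open>\<int> \<times> \<real>\<close>. Split it according to which factor carries
  the larger spatial frequency and apply Cauchy-Schwarz with the \<open>X\<^sup>k\<^sup>,\<^sup>b\<close> weights moved onto the
  factors (a Schur test). With \<open>p = 1 - 2\<eta>\<close> and \<open>q = 1 + 2\<eta>\<close>, everything reduces to a bound,
  uniform in the dominant frequency \<open>(A, \<delta>)\<close>, on
  \<open>\<Sum>\<^bsub>\<bar>a\<bar> \<le> \<bar>A\<bar>\<^esub> \<integral> \<langle>a - A\<rangle>\<^bsup>2s\<^esup> \<langle>\<beta> - \<delta>\<rangle>\<^bsup>-p\<^esup> \<langle>a\<rangle>\<^bsup>-2k\<^esup> \<langle>\<beta> + a\<^sup>2\<rangle>\<^bsup>-q\<^esup> \<langle>A\<rangle>\<^bsup>-2k\<^esup> \<langle>\<delta> + A\<^sup>2\<rangle>\<^bsup>-q\<^esup> d\<beta>\<close>.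
  The \<open>\<beta>\<close>-integral is a convolution of brackets and yields \<open>\<langle>A\<^sup>2 - a\<^sup>2\<rangle>\<^bsup>-p\<^esup>\<close>; the remaining lattice
  sum is controlled through the factorisation \<open>A\<^sup>2 - a\<^sup>2 = (A - a)(A + a)\<close>, which needs \<open>s \<le> 2k\<close>
  and \<open>s - k < p\<close>. The latter holds for small \<open>\<eta>\<close> because \<open>\<bar>k - s\<bar> < 1\<close>.\<close>

section \<open>Japanese brackets\<close>

lemma jb_ge_1: "1 \<le> jb x"
  by (simp add: jb_def)

lemma jb_pos: "0 < jb x"
  by (simp add: jb_def)

lemma jb_minus: "jb (- x) = jb x"
  by (simp add: jb_def)

lemma jb_diff_le_mult: "jb (x - y) \<le> jb x * jb y"
proof -
  have "jb x * jb y = 1 + \<bar>x\<bar> + \<bar>y\<bar> + \<bar>x\<bar> * \<bar>y\<bar>"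
    by (simp add: jb_def algebra_simps)
  moreover have "0 \<le> \<bar>x\<bar> * \<bar>y\<bar>"
    by simp
  ultimately show ?thesis
    using abs_triangle_ineq4[of x y] unfolding jb_def by linarith
qed

lemma jb_powr_sq: "(jb x powr a)\<^sup>2 = jb x powr (2 * a)"
  by (simp add: power2_eq_square jb_pos flip: powr_add)

lemma borel_measurable_jb[measurable]: "jb \<in> borel_measurable borel"
  unfolding jb_def by measurable

lemma jb_powr_le_double:
  assumes "0 \<le> s" "\<bar>x\<bar> \<le> 2 * \<bar>y\<bar>"
  shows "jb x powr s \<le> 2 powr s * jb y powr s"
proof -
  have "jb x powr s \<le> (2 * jb y) powr s"
    using assms jb_pos[of x] by (intro powr_mono2) (auto simp: jb_def)
  then show ?thesis by (simp add: powr_mult)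
qed

lemma nn_integral_jb_powr_le:
  fixes q :: real assumes q: "1 < q"
  shows "(\<integral>\<^sup>+x. ennreal (jb (x + c) powr (-q)) \<partial>lborel) \<le> ennreal (2 / (q - 1))"
proof -
  define g where "g = (\<lambda>y::real. if y \<in> {1..} then y powr (-q) else 0)"
  have [measurable]: "g \<in> borel_measurable borel"
    unfolding g_def by measurable
  have "((\<lambda>y. y powr (-q)) has_integral (- (1 powr (-q + 1)) / (-q + 1))) {1..}"
    using q by (intro has_integral_powr_to_inf) auto
  moreover have "- (1 powr (-q + 1)) / (-q + 1) = 1 / (q - 1)"
    using q by (simp add: divide_simps)
  ultimately have "(g has_integral (1 / (q - 1))) UNIV"
    unfolding g_def has_integral_restrict_UNIV by simp
  then have g_integral: "(\<integral>\<^sup>+y. ennreal (g y) \<partial>lborel) = ennreal (1 / (q - 1))"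
    by (intro nn_integral_has_integral_lborel) (auto simp: g_def)
  have "(\<integral>\<^sup>+x. ennreal (jb (x + c) powr (-q)) \<partial>lborel) = (\<integral>\<^sup>+x. ennreal (jb x powr (-q)) \<partial>lborel)"
    using nn_integral_real_affine[of "\<lambda>x. ennreal (jb x powr (-q))" 1 c] by (simp add: add.commute)
  also have "\<dots> \<le> (\<integral>\<^sup>+x. ennreal (g (1 + x)) + ennreal (g (1 - x)) \<partial>lborel)"
    by (intro nn_integral_mono) (auto simp: g_def jb_def add.commute)
  also have "\<dots> = (\<integral>\<^sup>+x. ennreal (g (1 + x)) \<partial>lborel) + (\<integral>\<^sup>+x. ennreal (g (1 - x)) \<partial>lborel)"
    by (rule nn_integral_add) auto
  also have "\<dots> = 2 * ennreal (1 / (q - 1))"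
    using nn_integral_real_affine[of "\<lambda>x. ennreal (g x)" 1 1]
      nn_integral_real_affine[of "\<lambda>x. ennreal (g x)" "-1" 1] g_integral
    by (simp add: mult_2)
  also have "\<dots> = ennreal (2 / (q - 1))"
    using q ennreal_mult[of 2 "1 / (q - 1)"] by simp
  finally show ?thesis .
qed

text \<open>One of \<open>u\<close>, \<open>v\<close> is at least half their distance \<open>\<bar>u - v\<bar>\<close> away from 0.\<close>
lemma jb_powr_mult_le:
  fixes p q u v :: real assumes pq: "0 \<le> p" "p \<le> q"
  shows "jb u powr (-p) * jb v powr (-q) \<le> 2 powr q * jb (u - v) powr (-p) * (jb u powr (-q) + jb v powr (-q))"
proof (cases "\<bar>u - v\<bar> \<le> 2 * \<bar>u\<bar>")
  case True
  have "jb (u - v) \<le> 2 * jb u"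
    using True by (simp add: jb_def)
  then have "jb u powr (-p) \<le> (jb (u - v) / 2) powr (-p)"
    using pq by (intro powr_mono2') (auto simp: jb_pos)
  also have "\<dots> = 2 powr p * jb (u - v) powr (-p)"
    by (simp add: powr_divide powr_minus_divide divide_simps jb_pos)
  also have "\<dots> \<le> 2 powr q * jb (u - v) powr (-p)"
    using pq by (intro mult_right_mono powr_mono) auto
  finally have "jb u powr (-p) * jb v powr (-q) \<le> 2 powr q * jb (u - v) powr (-p) * jb v powr (-q)"
    by (intro mult_right_mono) auto
  also have "\<dots> \<le> 2 powr q * jb (u - v) powr (-p) * (jb u powr (-q) + jb v powr (-q))"
    by (intro mult_left_mono) auto
  finally show ?thesis .
next
  case False
  have uv: "jb u \<le> jb (u - v)" using False by (simp add: jb_def)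
  have "jb (u - v) \<le> 2 * jb v"
    using False by (simp add: jb_def)
  then have "jb v powr (-q) \<le> (jb (u - v) / 2) powr (-q)"
    using pq by (intro powr_mono2') (auto simp: jb_pos)
  also have "\<dots> = 2 powr q * jb (u - v) powr (-q)"
    by (simp add: powr_divide powr_minus_divide divide_simps jb_pos)
  finally have v: "jb v powr (-q) \<le> 2 powr q * jb (u - v) powr (-q)" .
  have "jb u powr (-p) * jb v powr (-q) \<le> jb u powr (-p) * (2 powr q * jb (u - v) powr (-q))"
    using v by (intro mult_left_mono) auto
  also have "\<dots> = 2 powr q * jb (u - v) powr (-p) * (jb u powr (-p) * jb (u - v) powr (-(q - p)))"
    by (simp add: powr_add[symmetric] mult_ac)
  also have "\<dots> \<le> 2 powr q * jb (u - v) powr (-p) * (jb u powr (-p) * jb u powr (-(q - p)))"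
    using uv pq by (intro mult_left_mono powr_mono2') (auto simp: jb_pos)
  also have "\<dots> \<le> 2 powr q * jb (u - v) powr (-p) * (jb u powr (-q) + jb v powr (-q))"
    by (intro mult_left_mono) (auto simp: powr_add[symmetric])
  finally show ?thesis .
qed

lemma nn_integral_jb_powr_mult_le:
  fixes p q A B :: real assumes pq: "0 \<le> p" "p \<le> q" "1 < q"
  shows "(\<integral>\<^sup>+x. ennreal (jb (x + A) powr (-p) * jb (x + B) powr (-q)) \<partial>lborel)
     \<le> ennreal (2 powr q * (4 / (q - 1)) * jb (A - B) powr (-p))"
proof -
  let ?c = "2 powr q * jb (A - B) powr (-p)"
  have pointwise: "jb (x + A) powr (-p) * jb (x + B) powr (-q) \<le> ?c * (jb (x + A) powr (-q) + jb (x + B) powr (-q))" for x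
    using jb_powr_mult_le[OF pq(1,2), of "x + A" "x + B"] by simp
  have "(\<integral>\<^sup>+x. ennreal (jb (x + A) powr (-p) * jb (x + B) powr (-q)) \<partial>lborel)
     \<le> (\<integral>\<^sup>+x. ennreal ?c * (ennreal (jb (x + A) powr (-q)) + ennreal (jb (x + B) powr (-q))) \<partial>lborel)"
    using pointwise by (intro nn_integral_mono) (simp add: ennreal_mult[symmetric] ennreal_plus[symmetric] del: ennreal_plus)
  also have "\<dots> = ennreal ?c * ((\<integral>\<^sup>+x. ennreal (jb (x + A) powr (-q)) \<partial>lborel) + (\<integral>\<^sup>+x. ennreal (jb (x + B) powr (-q)) \<partial>lborel))"
    by (simp add: nn_integral_cmult nn_integral_add)
  also have "\<dots> \<le> ennreal ?c * (ennreal (2 / (q - 1)) + ennreal (2 / (q - 1)))"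
    using nn_integral_jb_powr_le[OF pq(3)] by (intro mult_left_mono add_mono) auto
  also have "\<dots> = ennreal (2 powr q * (4 / (q - 1)) * jb (A - B) powr (-p))"
    using pq by (simp add: ennreal_plus[symmetric] ennreal_mult[symmetric] del: ennreal_plus)
  finally show ?thesis .
qed

lemma jb_powr_mult_le_jb_diff:
  fixes p q x y :: real assumes "0 \<le> p" "p \<le> q"
  shows "jb x powr (-q) * jb y powr (-p) \<le> jb (x - y) powr (-p)"
proof -
  have "jb x powr (-q) * jb y powr (-p) \<le> jb x powr (-p) * jb y powr (-p)"
    using assms jb_ge_1[of x] by (intro mult_right_mono powr_mono) auto
  also have "\<dots> = (jb x * jb y) powr (-p)"
    by (simp add: powr_mult jb_pos)
  also have "\<dots> \<le> jb (x - y) powr (-p)"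
    using assms jb_diff_le_mult[of x y] by (intro powr_mono2') (auto simp: jb_pos)
  finally show ?thesis .
qed

section \<open>Lattice sums\<close>

lemma powr_nonpos_le_one: "a \<le> 0 \<Longrightarrow> 1 \<le> (x::real) \<Longrightarrow> x powr a \<le> 1"
  using powr_mono[of a 0 x] by simp

lemma powr_neg_le_diff_powr:
  fixes r :: real assumes r: "0 \<le> r" "r < 1"
  shows "(1 + real N) powr (-r) \<le> ((1 + real N) powr (1 - r) - real N powr (1 - r)) / (1 - r)"
proof (cases "N = 0")
  case True then show ?thesis using r by simp
next
  case False
  have "((\<lambda>x. x powr (1 - r)) has_real_derivative (1 - r) * x powr (1 - r - 1)) (at x)"
    if "real N \<le> x" for x
    using False that by (intro has_real_derivative_powr) auto
  then obtain z where z: "real N < z" "z < 1 + real N"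
    and mvt: "(1 + real N) powr (1 - r) - real N powr (1 - r) = (1 - r) * z powr (- r)"
    using MVT2[of "real N" "1 + real N" "\<lambda>x. x powr (1 - r)"] by fastforce
  have "(1 + real N) powr (-r) \<le> z powr (-r)"
    using z r by (intro powr_mono2') auto
  also have "\<dots> = ((1 + real N) powr (1 - r) - real N powr (1 - r)) / (1 - r)"
    using mvt r by simp
  finally show ?thesis .
qed

lemma sum_powr_neg_le:
  fixes r :: real assumes "0 \<le> r" "r < 1"
  shows "(\<Sum>j<N. (1 + real j) powr (-r)) \<le> real N powr (1 - r) / (1 - r)"
proof (induction N)
  case (Suc N)
  then show ?case
    using powr_neg_le_diff_powr[OF assms, of N] by (simp add: diff_divide_distrib add.commute)
qed simp

lemma resonance_term_le_low:
  fixes k s p r m t :: real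
  assumes r: "0 \<le> r" "r \<le> 2 * k" and s: "2 * s - 2 * k + 1 - r - 2 * p \<le> 0"
    and p: "1/2 \<le> p" and t: "0 \<le> t" "2 * t \<le> m" and m: "1 \<le> m"
  shows "jb m powr (2 * s - 2 * k) * (jb t powr (-2 * k) * jb (m\<^sup>2 - t\<^sup>2) powr (-p))
    \<le> 2 powr (r + 3 * p - 1) * m powr (r - 1) * (1 + t) powr (-r)"
proof -
  define J e where "J = 1 + m" and "e = 1 - r - 2 * p"
  have J: "1 \<le> J" "J \<le> 2 * m"
    using m by (simp_all add: J_def)
  have "t\<^sup>2 \<le> (m / 2)\<^sup>2"
    using t by (intro power_mono) auto
  then have "m\<^sup>2 / 2 \<le> m\<^sup>2 - t\<^sup>2"
    by (simp add: power_divide) (use zero_le_power2[of t] in linarith)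
  then have "m\<^sup>2 / 2 \<le> jb (m\<^sup>2 - t\<^sup>2)"
    unfolding jb_def by linarith
  then have "jb (m\<^sup>2 - t\<^sup>2) powr (-p) \<le> (m\<^sup>2 / 2) powr (-p)"
    using m p by (intro powr_mono2') auto
  also have "\<dots> = 2 powr p / m powr (2 * p)"
    using m by (simp add: powr_divide powr_powr powr_minus_divide flip: powr_numeral)
  finally have resonance: "jb (m\<^sup>2 - t\<^sup>2) powr (-p) \<le> 2 powr p / m powr (2 * p)" .
  have "1 / m powr (2 * p) = m powr (r - 1) * m powr e"
    using m by (simp add: e_def powr_add[symmetric] powr_minus_divide)
  also have "\<dots> \<le> m powr (r - 1) * (J / 2) powr e"
    using J r p unfolding e_def by (intro mult_left_mono powr_mono2') auto
  also have "\<dots> = 2 powr (r + 2 * p - 1) * m powr (r - 1) * J powr e"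
    using J by (simp add: e_def powr_divide powr_minus_divide divide_simps powr_diff powr_add)
  finally have m_powr: "1 / m powr (2 * p) \<le> 2 powr (r + 2 * p - 1) * m powr (r - 1) * J powr e" .
  have J_powr: "J powr (2 * s - 2 * k) * J powr e \<le> 1"
    using J s by (simp add: e_def powr_add[symmetric] powr_nonpos_le_one)
  have t_powr: "jb t powr (-2 * k) \<le> (1 + t) powr (-r)"
    using r t by (simp add: jb_def powr_mono)
  have "jb m powr (2 * s - 2 * k) * (jb t powr (-2 * k) * jb (m\<^sup>2 - t\<^sup>2) powr (-p))
      \<le> J powr (2 * s - 2 * k) * ((1 + t) powr (-r) * (2 powr p * (1 / m powr (2 * p))))"
    using resonance t_powr m unfolding J_def by (intro mult_left_mono mult_mono) (auto simp: jb_def)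
  also have "\<dots> \<le> J powr (2 * s - 2 * k)
      * ((1 + t) powr (-r) * (2 powr p * (2 powr (r + 2 * p - 1) * m powr (r - 1) * J powr e)))"
    using m_powr by (intro mult_left_mono) auto
  also have "\<dots> = 2 powr (r + 3 * p - 1) * m powr (r - 1) * (1 + t) powr (-r) * (J powr (2 * s - 2 * k) * J powr e)"
    using powr_add[of 2 p "r + 2 * p - 1"] by (simp add: algebra_simps)
  also have "\<dots> \<le> 2 powr (r + 3 * p - 1) * m powr (r - 1) * (1 + t) powr (-r)"
    using J_powr by (intro mult_left_le) auto
  finally show ?thesis .
qed

lemma resonance_term_le_high:
  fixes k s p m t :: real
  assumes k: "0 \<le> k" "s \<le> 2 * k" and p: "1/2 \<le> p" and t: "t < m" "m < 2 * t" and m: "1 \<le> m"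
  shows "jb m powr (2 * s - 2 * k) * (jb t powr (-2 * k) * jb (m\<^sup>2 - t\<^sup>2) powr (-p))
    \<le> 2 powr (2 * k) * m powr (p - 1) * (m - t) powr (-p)"
proof -
  define J where "J = 1 + m"
  have J: "1 \<le> J"
    using m by (simp add: J_def)
  have "0 \<le> t * (m - t)"
    using t m by simp
  then have "m * (m - t) \<le> m\<^sup>2 - t\<^sup>2"
    by (simp add: power2_eq_square algebra_simps)
  then have "m * (m - t) \<le> jb (m\<^sup>2 - t\<^sup>2)"
    unfolding jb_def by linarith
  then have "jb (m\<^sup>2 - t\<^sup>2) powr (-p) \<le> m powr (-p) * (m - t) powr (-p)"
    using m t p by (simp add: powr_mult[symmetric] powr_mono2')
  also have "m powr (-p) \<le> m powr (p - 1)"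
    using m p by (intro powr_mono) auto
  finally have resonance: "jb (m\<^sup>2 - t\<^sup>2) powr (-p) \<le> m powr (p - 1) * (m - t) powr (-p)"
    using t by (simp add: mult_right_mono)
  have "jb t powr (-2 * k) \<le> (J / 2) powr (-2 * k)"
    using t m k unfolding J_def by (intro powr_mono2') (auto simp: jb_def)
  also have "\<dots> = 2 powr (2 * k) * J powr (-2 * k)"
    using J by (simp add: powr_divide powr_minus_divide divide_simps)
  finally have t_powr: "jb t powr (-2 * k) \<le> 2 powr (2 * k) * J powr (-2 * k)" .
  have J_powr: "J powr (2 * s - 2 * k) * J powr (-2 * k) \<le> 1"
    using J k by (simp add: powr_add[symmetric] powr_nonpos_le_one)
  have "jb m powr (2 * s - 2 * k) * (jb t powr (-2 * k) * jb (m\<^sup>2 - t\<^sup>2) powr (-p))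
      \<le> J powr (2 * s - 2 * k) * ((2 powr (2 * k) * J powr (-2 * k)) * (m powr (p - 1) * (m - t) powr (-p)))"
    using resonance t_powr m unfolding J_def by (intro mult_left_mono mult_mono) (auto simp: jb_def)
  also have "\<dots> = 2 powr (2 * k) * m powr (p - 1) * (m - t) powr (-p) * (J powr (2 * s - 2 * k) * J powr (-2 * k))"
    by (simp add: mult_ac)
  also have "\<dots> \<le> 2 powr (2 * k) * m powr (p - 1) * (m - t) powr (-p)"
    using J_powr by (intro mult_left_le) auto
  finally show ?thesis .
qed

text \<open>The resonance function \<open>m\<^sup>2 - t\<^sup>2\<close> is at least \<open>m\<^sup>2/2\<close> if \<open>t \<le> m/2\<close> and at least
  \<open>m (m - t)\<close> otherwise; in the second case \<open>\<langle>t\<rangle>\<close> is comparable to \<open>\<langle>m\<rangle>\<close>.\<close>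
lemma resonance_term_le:
  fixes k s p r m t :: real
  assumes r: "0 \<le> r" "r \<le> 2 * k" and s: "s \<le> 2 * k" "2 * s - 2 * k + 1 - r - 2 * p \<le> 0"
    and p: "1/2 \<le> p" and t: "0 \<le> t" "t < m" and m: "1 \<le> m"
  shows "jb m powr (2 * s - 2 * k) * (jb t powr (-2 * k) * jb (m\<^sup>2 - t\<^sup>2) powr (-p))
    \<le> 2 powr (r + 3 * p - 1) * m powr (r - 1) * (1 + t) powr (-r)
      + 2 powr (2 * k) * m powr (p - 1) * (m - t) powr (-p)"
proof (cases "2 * t \<le> m")
  case True
  then show ?thesis
    using resonance_term_le_low[OF r s(2) p t(1) True m] by (simp add: add_increasing2)
next
  case False
  have "0 \<le> k"
    using r by simp
  then show ?thesis
    using resonance_term_le_high[OF _ s(1) p t(2) _ m] False by (simp add: add_increasing)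
qed

lemma weighted_resonance_sum_nat_le:
  fixes k s p r :: real and M :: nat
  assumes r: "0 \<le> r" "r < 1" "r \<le> 2 * k" and s: "s \<le> 2 * k" "2 * s - 2 * k + 1 - r - 2 * p \<le> 0"
    and p: "1/2 \<le> p" "p < 1"
  shows "jb (real M) powr (2 * s - 2 * k) * (\<Sum>t\<le>M. jb (real t) powr (-2 * k) * jb ((real M)\<^sup>2 - (real t)\<^sup>2) powr (-p))
    \<le> 2 powr (r + 3 * p - 1) / (1 - r) + 2 powr (2 * k) / (1 - p) + 1"
proof (cases "M = 0")
  case True
  then show ?thesis
    using r p by (simp add: jb_def add_nonneg_nonneg)
next
  case False
  define m where "m = real M"
  have m: "1 \<le> m"
    using False by (simp add: m_def)
  have term_M: "jb m powr (2 * s - 2 * k) * (jb m powr (-2 * k) * jb (m\<^sup>2 - m\<^sup>2) powr (-p)) \<le> 1"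
    using s jb_ge_1[of m] by (simp add: jb_def[of 0] powr_add[symmetric] powr_nonpos_le_one)
  have "jb m powr (2 * s - 2 * k) * (\<Sum>t<M. jb (real t) powr (-2 * k) * jb (m\<^sup>2 - (real t)\<^sup>2) powr (-p))
      \<le> (\<Sum>t<M. 2 powr (r + 3 * p - 1) * m powr (r - 1) * (1 + real t) powr (-r)
          + 2 powr (2 * k) * m powr (p - 1) * (m - real t) powr (-p))"
    unfolding sum_distrib_left using r s p m
    by (intro sum_mono resonance_term_le) (auto simp: m_def)
  also have "\<dots> = 2 powr (r + 3 * p - 1) * m powr (r - 1) * (\<Sum>t<M. (1 + real t) powr (-r))
      + 2 powr (2 * k) * m powr (p - 1) * (\<Sum>t<M. (1 + real t) powr (-p))"
    using sum.nat_diff_reindex[of "\<lambda>t. (m - real t) powr (-p)" M]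
    by (simp add: sum.distrib sum_distrib_left m_def of_nat_diff)
  also have "\<dots> \<le> 2 powr (r + 3 * p - 1) * m powr (r - 1) * (m powr (1 - r) / (1 - r))
      + 2 powr (2 * k) * m powr (p - 1) * (m powr (1 - p) / (1 - p))"
    using sum_powr_neg_le[of r M] sum_powr_neg_le[of p M] r p
    by (intro add_mono mult_left_mono) (auto simp: m_def)
  also have "\<dots> = 2 powr (r + 3 * p - 1) / (1 - r) + 2 powr (2 * k) / (1 - p)"
    using m by (simp add: mult.assoc flip: powr_add)
  finally show ?thesis
    using term_M by (simp add: m_def lessThan_Suc_atMost[symmetric] distrib_left)
qed

lemma sum_symmetric_int_le:
  fixes \<psi> :: "int \<Rightarrow> real"
  assumes nonneg: "\<And>a. 0 \<le> \<psi> a" and sym: "\<And>a. \<psi> (- a) = \<psi> a"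
  shows "(\<Sum>a\<in>{- int M..int M}. \<psi> a) \<le> 2 * (\<Sum>t\<le>M. \<psi> (int t))"
proof -
  let ?A = "int ` {..M}" and ?B = "uminus ` int ` {..M}"
  have "{- int M..int M} \<subseteq> ?A \<union> ?B"
  proof
    fix a assume "a \<in> {- int M..int M}"
    then show "a \<in> ?A \<union> ?B"
      by (cases "0 \<le> a") (auto simp: image_iff intro!: bexI[of _ "nat \<bar>a\<bar>"])
  qed
  then have "(\<Sum>a\<in>{- int M..int M}. \<psi> a) \<le> (\<Sum>a\<in>?A \<union> ?B. \<psi> a)"
    using nonneg by (intro sum_mono2) auto
  also have "\<dots> \<le> (\<Sum>a\<in>?A. \<psi> a) + (\<Sum>a\<in>?B. \<psi> a)"
    using sum.union_inter[of ?A ?B \<psi>] sum_nonneg[of "?A \<inter> ?B" \<psi>] nonneg by simp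
  also have "\<dots> = 2 * (\<Sum>t\<le>M. \<psi> (int t))"
    by (simp add: sum.reindex inj_on_def sym)
  finally show ?thesis .
qed

lemma weighted_resonance_sum_bounded:
  fixes k s p :: real
  assumes s: "0 \<le> s" "s \<le> 2 * k" "s - k < p" and p: "1/2 \<le> p" "p < 1"
  shows "\<exists>L. \<forall>N::int. jb (of_int N) powr (2 * s - 2 * k)
    * (\<Sum>a\<in>{-\<bar>N\<bar>..\<bar>N\<bar>}. jb (of_int a) powr (-2 * k) * jb ((of_int N)\<^sup>2 - (of_int a)\<^sup>2) powr (-p)) \<le> L"
proof (intro exI allI)
  define r where "r = max 0 (2 * s - 2 * k + 1 - 2 * p)"
  have r: "0 \<le> r" "r < 1" "r \<le> 2 * k" and rs: "2 * s - 2 * k + 1 - r - 2 * p \<le> 0"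
    using s p by (auto simp: r_def)
  fix N :: int
  define M where "M = nat \<bar>N\<bar>"
  define \<psi> where "\<psi> a = jb (of_int a) powr (-2 * k) * jb ((real M)\<^sup>2 - (of_int a)\<^sup>2) powr (-p)" for a :: int
  have "(\<Sum>a\<in>{-\<bar>N\<bar>..\<bar>N\<bar>}. jb (of_int a) powr (-2 * k) * jb ((of_int N)\<^sup>2 - (of_int a)\<^sup>2) powr (-p))
      = (\<Sum>a\<in>{- int M..int M}. \<psi> a)"
    by (simp add: M_def \<psi>_def)
  also have "\<dots> \<le> 2 * (\<Sum>t\<le>M. jb (real t) powr (-2 * k) * jb ((real M)\<^sup>2 - (real t)\<^sup>2) powr (-p))"
    using sum_symmetric_int_le[of \<psi> M] by (simp add: \<psi>_def jb_minus[of "of_int _", simplified])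
  finally have sum_le: "(\<Sum>a\<in>{-\<bar>N\<bar>..\<bar>N\<bar>}. jb (of_int a) powr (-2 * k) * jb ((of_int N)\<^sup>2 - (of_int a)\<^sup>2) powr (-p))
    \<le> 2 * (\<Sum>t\<le>M. jb (real t) powr (-2 * k) * jb ((real M)\<^sup>2 - (real t)\<^sup>2) powr (-p))" .
  have "jb (of_int N) = jb (real M)"
    by (simp add: M_def jb_def)
  then have "jb (of_int N) powr (2 * s - 2 * k)
      * (\<Sum>a\<in>{-\<bar>N\<bar>..\<bar>N\<bar>}. jb (of_int a) powr (-2 * k) * jb ((of_int N)\<^sup>2 - (of_int a)\<^sup>2) powr (-p))
    \<le> 2 * (jb (real M) powr (2 * s - 2 * k)
      * (\<Sum>t\<le>M. jb (real t) powr (-2 * k) * jb ((real M)\<^sup>2 - (real t)\<^sup>2) powr (-p)))"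
    using mult_left_mono[OF sum_le, of "jb (real M) powr (2 * s - 2 * k)"] by (simp add: mult.left_commute)
  also have "\<dots> \<le> 2 * (2 powr (r + 3 * p - 1) / (1 - r) + 2 powr (2 * k) / (1 - p) + 1)"
    using weighted_resonance_sum_nat_le[OF r s(2) rs p, of M] by (intro mult_left_mono) simp_all
  finally show "jb (of_int N) powr (2 * s - 2 * k)
      * (\<Sum>a\<in>{-\<bar>N\<bar>..\<bar>N\<bar>}. jb (of_int a) powr (-2 * k) * jb ((of_int N)\<^sup>2 - (of_int a)\<^sup>2) powr (-p))
    \<le> 2 * (2 powr (r + 3 * p - 1) / (1 - r) + 2 powr (2 * k) / (1 - p) + 1)" .
qed

section \<open>The frequency space \<open>\<int> \<times> \<real>\<close>\<close>

definition freq_measure :: "(int \<times> real) measure" where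
  "freq_measure = count_space UNIV \<Otimes>\<^sub>M lborel"

lemma sets_freq_measure[measurable_cong]:
  "sets freq_measure = sets (count_space UNIV \<Otimes>\<^sub>M lborel)"
  by (simp add: freq_measure_def)

lemma space_freq_measure[simp]: "space freq_measure = UNIV"
  by (simp add: freq_measure_def space_pair_measure)

lemma measurable_freq_add_pair:
  "(\<lambda>z. fst z + snd z) \<in> measurable (freq_measure \<Otimes>\<^sub>M freq_measure) freq_measure"
proof -
  have "(\<lambda>z::(int \<times> real) \<times> (int \<times> real). (fst (fst z), fst (snd z)))
      \<in> measurable (freq_measure \<Otimes>\<^sub>M freq_measure) (count_space UNIV \<Otimes>\<^sub>M count_space UNIV)"
    by measurable
  moreover have "(\<lambda>z::int \<times> int. fst z + snd z)
      \<in> measurable (count_space UNIV \<Otimes>\<^sub>M count_space UNIV) (count_space UNIV)"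
    by (simp add: pair_measure_countable)
  ultimately have [measurable]: "(\<lambda>z::(int \<times> real) \<times> (int \<times> real). fst (fst z) + fst (snd z))
      \<in> measurable (freq_measure \<Otimes>\<^sub>M freq_measure) (count_space UNIV)"
    using measurable_compose by fastforce
  show ?thesis
    unfolding plus_prod_def by measurable
qed

lemma measurable_freq_add[measurable]:
  assumes "f \<in> measurable M freq_measure" "g \<in> measurable M freq_measure"
  shows "(\<lambda>x. f x + g x) \<in> measurable M freq_measure"
  using measurable_compose[OF measurable_Pair[OF assms] measurable_freq_add_pair] by simp

lemma measurable_freq_uminus[measurable]:
  assumes "f \<in> measurable M freq_measure"
  shows "(\<lambda>x. - f x) \<in> measurable M freq_measure"
proof -
  have "(uminus :: int \<times> real \<Rightarrow> _) \<in> measurable freq_measure freq_measure"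
    unfolding uminus_prod_def by measurable
  from measurable_compose[OF assms this] show ?thesis by (simp add: o_def)
qed

lemma measurable_freq_diff[measurable]:
  assumes "f \<in> measurable M freq_measure" "g \<in> measurable M freq_measure"
  shows "(\<lambda>x. f x - g x) \<in> measurable M freq_measure"
  unfolding diff_conv_add_uminus by (intro measurable_freq_add measurable_freq_uminus assms)

lemma measurable_freq_fst[measurable]:
  "f \<in> measurable M freq_measure \<Longrightarrow> (\<lambda>x. fst (f x)) \<in> measurable M (count_space UNIV)"
  unfolding freq_measure_def by measurable

lemma measurable_freq_snd[measurable]:
  "f \<in> measurable M freq_measure \<Longrightarrow> (\<lambda>x. snd (f x)) \<in> borel_measurable M"
  using measurable_compose[of f M "count_space UNIV \<Otimes>\<^sub>M lborel" snd lborel]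
  by (simp add: freq_measure_def o_def)

lemma measurable_freq_abs_fst_le[measurable]:
  assumes "f \<in> measurable M freq_measure" "g \<in> measurable M freq_measure"
  shows "(\<lambda>x. \<bar>fst (f x)\<bar> \<le> \<bar>fst (g x)\<bar>) \<in> measurable M (count_space UNIV)"
proof -
  have "(\<lambda>x. (fst (f x), fst (g x))) \<in> measurable M (count_space UNIV)"
    using measurable_Pair[OF measurable_freq_fst[OF assms(1)] measurable_freq_fst[OF assms(2)]]
    by (simp add: pair_measure_countable)
  from measurable_compose[OF this, of "\<lambda>(i, j). \<bar>i\<bar> \<le> \<bar>j\<bar>" "count_space UNIV"]
  show ?thesis by (simp add: case_prod_beta)
qed

lemma measurable_freq_measure_curried:
  assumes "\<And>n. f n \<in> measurable lborel N"
  shows "(\<lambda>x. f (fst x) (snd x)) \<in> measurable freq_measure N"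
  unfolding freq_measure_def by (rule measurable_pair_measure_countable1) (use assms in auto)

lemma sigma_finite_freq_measure: "sigma_finite_measure freq_measure"
  unfolding freq_measure_def
  by (intro sigma_finite_pair_measure sigma_finite_measure_count_space_countable lborel.sigma_finite_measure_axioms) auto

lemma pair_sigma_finite_freq_measure: "pair_sigma_finite freq_measure freq_measure"
  using sigma_finite_freq_measure by (simp add: pair_sigma_finite_def)

lemma nn_integral_freq_measure:
  assumes "f \<in> borel_measurable freq_measure"
  shows "(\<integral>\<^sup>+x. f x \<partial>freq_measure) = (\<integral>\<^sup>+n. \<integral>\<^sup>+t. f (n, t) \<partial>lborel \<partial>count_space UNIV)"
  using lborel.nn_integral_fst[of f "count_space UNIV"] assms by (simp add: freq_measure_def)

lemma nn_integral_freq_translate: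
  assumes [measurable]: "f \<in> borel_measurable freq_measure"
  shows "(\<integral>\<^sup>+x. f (c + x) \<partial>freq_measure) = (\<integral>\<^sup>+x. f x \<partial>freq_measure)"
proof -
  have "(\<integral>\<^sup>+x. f (c + x) \<partial>freq_measure) = (\<integral>\<^sup>+n. \<integral>\<^sup>+t. f (fst c + n, snd c + t) \<partial>lborel \<partial>count_space UNIV)"
    by (subst nn_integral_freq_measure) (simp_all add: plus_prod_def case_prod_unfold)
  also have "\<dots> = (\<integral>\<^sup>+n. \<integral>\<^sup>+t. f (fst c + n, t) \<partial>lborel \<partial>count_space UNIV)"
    using nn_integral_real_affine[of "\<lambda>t. f (fst c + _, t)" 1 "snd c"] by simp
  also have "\<dots> = (\<integral>\<^sup>+n. \<integral>\<^sup>+t. f (n, t) \<partial>lborel \<partial>count_space UNIV)"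
    using nn_integral_bij_count_space[of "\<lambda>n. fst c + n" UNIV UNIV "\<lambda>n. \<integral>\<^sup>+t. f (n, t) \<partial>lborel"]
    by (simp add: bij_betw_def inj_on_def surj_def)
  finally show ?thesis by (simp add: nn_integral_freq_measure)
qed

lemma nn_integral_freq_reflect:
  assumes [measurable]: "f \<in> borel_measurable freq_measure"
  shows "(\<integral>\<^sup>+x. f (- x) \<partial>freq_measure) = (\<integral>\<^sup>+x. f x \<partial>freq_measure)"
proof -
  have "(\<integral>\<^sup>+x. f (- x) \<partial>freq_measure) = (\<integral>\<^sup>+n. \<integral>\<^sup>+t. f (- n, - t) \<partial>lborel \<partial>count_space UNIV)"
    by (subst nn_integral_freq_measure) simp_all
  also have "\<dots> = (\<integral>\<^sup>+n. \<integral>\<^sup>+t. f (- n, t) \<partial>lborel \<partial>count_space UNIV)"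
    using nn_integral_real_affine[of "\<lambda>t. f (- _, t)" "-1" 0] by simp
  also have "\<dots> = (\<integral>\<^sup>+n. \<integral>\<^sup>+t. f (n, t) \<partial>lborel \<partial>count_space UNIV)"
    using nn_integral_bij_count_space[of uminus UNIV UNIV "\<lambda>n::int. \<integral>\<^sup>+t. f (n, t) \<partial>lborel"]
    by (simp add: bij_uminus)
  finally show ?thesis by (simp add: nn_integral_freq_measure)
qed

interpretation freq_measure: sigma_finite_measure freq_measure
  by (rule sigma_finite_freq_measure)

definition kernel_correlation ::
    "(int \<times> real \<Rightarrow> ennreal) \<Rightarrow> (int \<times> real \<Rightarrow> ennreal) \<Rightarrow> (int \<times> real \<Rightarrow> int \<times> real \<Rightarrow> ennreal) \<Rightarrow> int \<times> real \<Rightarrow> ennreal"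
  where "kernel_correlation f g \<kappa> x = (\<integral>\<^sup>+y. f (x + y) * g y * \<kappa> x y \<partial>freq_measure)"

lemma measurable_kernel_correlation[measurable]:
  assumes [measurable]: "f \<in> borel_measurable freq_measure" "g \<in> borel_measurable freq_measure"
    "case_prod \<kappa> \<in> borel_measurable (freq_measure \<Otimes>\<^sub>M freq_measure)"
  shows "kernel_correlation f g \<kappa> \<in> borel_measurable freq_measure"
  unfolding kernel_correlation_def by measurable

lemma nn_integral_correlation_sq_le:
  fixes f g W :: "int \<times> real \<Rightarrow> ennreal" and \<kappa> :: "int \<times> real \<Rightarrow> int \<times> real \<Rightarrow> ennreal"
  assumes [measurable]: "f \<in> borel_measurable freq_measure" "g \<in> borel_measurable freq_measure"
    "W \<in> borel_measurable freq_measure"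
    "case_prod \<kappa> \<in> borel_measurable (freq_measure \<Otimes>\<^sub>M freq_measure)"
    and kernel: "\<And>y. (\<integral>\<^sup>+x. W x * (\<kappa> x y)\<^sup>2 \<partial>freq_measure) \<le> K"
  shows "(\<integral>\<^sup>+x. W x * (kernel_correlation f g \<kappa> x)\<^sup>2 \<partial>freq_measure)
    \<le> K * (\<integral>\<^sup>+x. (f x)\<^sup>2 \<partial>freq_measure) * (\<integral>\<^sup>+y. (g y)\<^sup>2 \<partial>freq_measure)"
proof -
  let ?F = "\<integral>\<^sup>+x. (f x)\<^sup>2 \<partial>freq_measure" and ?G = "\<integral>\<^sup>+y. (g y)\<^sup>2 \<partial>freq_measure"
  have CS: "(\<integral>\<^sup>+y. f (x + y) * g y * \<kappa> x y \<partial>freq_measure)\<^sup>2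
      \<le> ?F * (\<integral>\<^sup>+y. (g y)\<^sup>2 * (\<kappa> x y)\<^sup>2 \<partial>freq_measure)" for x
  proof -
    have "(\<integral>\<^sup>+y. f (x + y) * (g y * \<kappa> x y) \<partial>freq_measure)\<^sup>2
        \<le> (\<integral>\<^sup>+y. (f (x + y))\<^sup>2 \<partial>freq_measure) * (\<integral>\<^sup>+y. (g y * \<kappa> x y)\<^sup>2 \<partial>freq_measure)"
      by (rule Cauchy_Schwarz_nn_integral) measurable
    also have "(\<integral>\<^sup>+y. (f (x + y))\<^sup>2 \<partial>freq_measure) = ?F"
      by (rule nn_integral_freq_translate[where f="\<lambda>y. (f y)\<^sup>2"]) measurable
    finally show ?thesis by (simp add: mult.assoc power_mult_distrib)
  qed
  have "(\<integral>\<^sup>+x. W x * (\<integral>\<^sup>+y. f (x + y) * g y * \<kappa> x y \<partial>freq_measure)\<^sup>2 \<partial>freq_measure)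
      \<le> (\<integral>\<^sup>+x. W x * (?F * (\<integral>\<^sup>+y. (g y)\<^sup>2 * (\<kappa> x y)\<^sup>2 \<partial>freq_measure)) \<partial>freq_measure)"
    using CS by (intro nn_integral_mono mult_left_mono) auto
  also have "\<dots> = (\<integral>\<^sup>+x. ?F * (W x * (\<integral>\<^sup>+y. (g y)\<^sup>2 * (\<kappa> x y)\<^sup>2 \<partial>freq_measure)) \<partial>freq_measure)"
    by (simp add: mult.left_commute)
  also have "\<dots> = ?F * (\<integral>\<^sup>+x. W x * (\<integral>\<^sup>+y. (g y)\<^sup>2 * (\<kappa> x y)\<^sup>2 \<partial>freq_measure) \<partial>freq_measure)"
    by (rule nn_integral_cmult) measurable
  also have "\<dots> = ?F * (\<integral>\<^sup>+x. \<integral>\<^sup>+y. W x * ((g y)\<^sup>2 * (\<kappa> x y)\<^sup>2) \<partial>freq_measure \<partial>freq_measure)"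
    by (simp add: nn_integral_cmult)
  also have "\<dots> = ?F * (\<integral>\<^sup>+y. \<integral>\<^sup>+x. W x * ((g y)\<^sup>2 * (\<kappa> x y)\<^sup>2) \<partial>freq_measure \<partial>freq_measure)"
    using pair_sigma_finite.Fubini[OF pair_sigma_finite_freq_measure,
        of "\<lambda>z. W (fst z) * ((g (snd z))\<^sup>2 * (\<kappa> (fst z) (snd z))\<^sup>2)"] by simp
  also have "\<dots> = ?F * (\<integral>\<^sup>+y. \<integral>\<^sup>+x. (g y)\<^sup>2 * (W x * (\<kappa> x y)\<^sup>2) \<partial>freq_measure \<partial>freq_measure)"
    by (simp add: mult.left_commute)
  also have "\<dots> = ?F * (\<integral>\<^sup>+y. (g y)\<^sup>2 * (\<integral>\<^sup>+x. W x * (\<kappa> x y)\<^sup>2 \<partial>freq_measure) \<partial>freq_measure)"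
    by (simp add: nn_integral_cmult)
  also have "\<dots> \<le> ?F * (\<integral>\<^sup>+y. (g y)\<^sup>2 * K \<partial>freq_measure)"
    by (intro mult_left_mono nn_integral_mono kernel) auto
  also have "\<dots> = K * ?F * ?G"
    by (simp add: nn_integral_multc nn_integral_cmult mult_ac)
  finally show ?thesis
    unfolding kernel_correlation_def .
qed

lemma nn_integral_correlation_sq_le_antidiagonal:
  fixes f g W :: "int \<times> real \<Rightarrow> ennreal" and \<kappa> :: "int \<times> real \<Rightarrow> int \<times> real \<Rightarrow> ennreal"
  assumes [measurable]: "f \<in> borel_measurable freq_measure" "g \<in> borel_measurable freq_measure"
    "W \<in> borel_measurable freq_measure"
    "case_prod \<kappa> \<in> borel_measurable (freq_measure \<Otimes>\<^sub>M freq_measure)"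
    and kernel: "\<And>z. (\<integral>\<^sup>+x. W x * (\<kappa> x (z - x))\<^sup>2 \<partial>freq_measure) \<le> K"
  shows "(\<integral>\<^sup>+x. W x * (kernel_correlation f g \<kappa> x)\<^sup>2 \<partial>freq_measure)
    \<le> K * (\<integral>\<^sup>+x. (f x)\<^sup>2 \<partial>freq_measure) * (\<integral>\<^sup>+y. (g y)\<^sup>2 \<partial>freq_measure)"
proof -
  have "(\<integral>\<^sup>+y. f (x + y) * g y * \<kappa> x y \<partial>freq_measure)
      = (\<integral>\<^sup>+u. f u * g (u - x) * \<kappa> x (u - x) \<partial>freq_measure)" for x
    using nn_integral_freq_translate[of "\<lambda>u. f u * g (u - x) * \<kappa> x (u - x)" x] by simp
  then have "(\<integral>\<^sup>+x. W x * (\<integral>\<^sup>+y. f (x + y) * g y * \<kappa> x y \<partial>freq_measure)\<^sup>2 \<partial>freq_measure)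
      = (\<integral>\<^sup>+x. W x * (\<integral>\<^sup>+u. f u * g (u - x) * \<kappa> x (u - x) \<partial>freq_measure)\<^sup>2 \<partial>freq_measure)"
    by simp
  also have "\<dots> = (\<integral>\<^sup>+x. W (- x) * (\<integral>\<^sup>+u. g (x + u) * f u * \<kappa> (- x) (x + u) \<partial>freq_measure)\<^sup>2 \<partial>freq_measure)"
    using nn_integral_freq_reflect[of "\<lambda>x. W x * (\<integral>\<^sup>+u. f u * g (u - x) * \<kappa> x (u - x) \<partial>freq_measure)\<^sup>2"]
    by (simp add: mult_ac add.commute)
  also have "\<dots> \<le> K * (\<integral>\<^sup>+x. (g x)\<^sup>2 \<partial>freq_measure) * (\<integral>\<^sup>+y. (f y)\<^sup>2 \<partial>freq_measure)"
  proof (rule nn_integral_correlation_sq_le[unfolded kernel_correlation_def])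
    show "(\<integral>\<^sup>+x. W (- x) * (\<kappa> (- x) (x + u))\<^sup>2 \<partial>freq_measure) \<le> K" for u
      using nn_integral_freq_reflect[of "\<lambda>x. W x * (\<kappa> x (u - x))\<^sup>2"] kernel[of u] by (simp add: add.commute)
  qed measurable
  finally show ?thesis
    by (simp add: kernel_correlation_def mult_ac)
qed

section \<open>The bilinear estimate\<close>

text \<open>\<open>xper_weight\<close> is the square root of the \<open>X\<^sup>k\<^sup>,\<^sup>b\<close> weight, while \<open>hh_weight\<close> is the full
  \<open>H\<^sup>b H\<^sup>s\<close> weight.\<close>
definition xper_weight :: "real \<Rightarrow> real \<Rightarrow> int \<times> real \<Rightarrow> real" where
  "xper_weight k b x = jb (of_int (fst x)) powr k * jb (snd x + (of_int (fst x))\<^sup>2) powr b"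

definition hh_weight :: "real \<Rightarrow> real \<Rightarrow> int \<times> real \<Rightarrow> real" where
  "hh_weight s b x = jb (of_int (fst x)) powr (2 * s) * jb (snd x) powr (2 * b)"

lemma xper_weight_pos: "0 < xper_weight k b x"
  using jb_pos[of "of_int (fst x)"] jb_pos[of "snd x + (of_int (fst x))\<^sup>2"] by (simp add: xper_weight_def)

lemma xper_weight_nonneg: "0 \<le> xper_weight k b x"
  using xper_weight_pos[of k b x] by simp

lemma xper_weight_sq:
  "(xper_weight k b x)\<^sup>2 = jb (of_int (fst x)) powr (2 * k) * jb (snd x + (of_int (fst x))\<^sup>2) powr (2 * b)"
  by (simp add: xper_weight_def power_mult_distrib jb_powr_sq)

lemma inverse_xper_weight_sq:
  "1 / (xper_weight k b x)\<^sup>2 = jb (of_int (fst x)) powr (-2 * k) * jb (snd x + (of_int (fst x))\<^sup>2) powr (-2 * b)"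
  by (simp add: xper_weight_sq powr_minus_divide)

lemma hh_weight_nonneg: "0 \<le> hh_weight s b x"
  by (simp add: hh_weight_def)

lemma hh_weight_minus: "hh_weight s b (- x) = hh_weight s b x"
  by (simp add: hh_weight_def jb_minus[of "of_int _", simplified] jb_minus)

lemma measurable_xper_weight[measurable]: "xper_weight k b \<in> borel_measurable freq_measure"
  unfolding xper_weight_def by measurable

lemma measurable_hh_weight[measurable]: "hh_weight s b \<in> borel_measurable freq_measure"
  unfolding hh_weight_def by measurable

lemma norm_infsum_le_nn_integral:
  fixes h :: "'a \<Rightarrow> complex"
  shows "ennreal (cmod (infsum h UNIV)) \<le> (\<integral>\<^sup>+m. ennreal (cmod (h m)) \<partial>count_space UNIV)"
proof (cases "(\<integral>\<^sup>+m. ennreal (cmod (h m)) \<partial>count_space UNIV) = \<infinity>")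
  case False
  then have "integrable (count_space UNIV) h"
    by (intro integrableI_bounded) (auto simp: top.not_eq_extremum)
  then have "infsum h UNIV = integral\<^sup>L (count_space UNIV) h"
    by (simp add: infsetsum_infsum[symmetric] Infinite_Set_Sum.abs_summable_on_def infsetsum_def)
  then show ?thesis
    using integral_norm_bound_ennreal[OF \<open>integrable (count_space UNIV) h\<close>] by simp
qed simp

lemma norm_integral_le_nn_integral:
  fixes h :: "real \<Rightarrow> complex"
  shows "ennreal (cmod (integral\<^sup>L lborel h)) \<le> (\<integral>\<^sup>+x. ennreal (cmod (h x)) \<partial>lborel)"
  by (cases "integrable lborel h") (simp_all add: integral_norm_bound_ennreal not_integrable_integral_eq)

lemma norm_prod_conj_hat_le:
  assumes [measurable]: "\<And>n. F n \<in> borel_measurable lborel" "\<And>n. G n \<in> borel_measurable lborel"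
  shows "ennreal (cmod (prod_conj_hat F G (fst x) (snd x)))
    \<le> (\<integral>\<^sup>+y. ennreal (cmod (F (fst (x + y)) (snd (x + y))) * cmod (G (fst y) (snd y))) \<partial>freq_measure)"
proof -
  have "ennreal (cmod (prod_conj_hat F G (fst x) (snd x)))
      \<le> (\<integral>\<^sup>+m. \<integral>\<^sup>+\<sigma>. ennreal (cmod (F (fst x - m) (snd x - \<sigma>)) * cmod (G (- m) (- \<sigma>))) \<partial>lborel \<partial>count_space UNIV)"
    unfolding prod_conj_hat_def
    by (rule order_trans[OF norm_infsum_le_nn_integral], intro nn_integral_mono order_trans[OF norm_integral_le_nn_integral])
      (simp add: norm_mult)
  also have "\<dots> = (\<integral>\<^sup>+y. ennreal (cmod (F (fst (x - y)) (snd (x - y))) * cmod (G (fst (- y)) (snd (- y)))) \<partial>freq_measure)"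
    by (subst nn_integral_freq_measure) simp_all
  also have "\<dots> = (\<integral>\<^sup>+y. ennreal (cmod (F (fst (x + y)) (snd (x + y))) * cmod (G (fst y) (snd y))) \<partial>freq_measure)"
    using nn_integral_freq_reflect[of "\<lambda>y. ennreal (cmod (F (fst (x - y)) (snd (x - y))) * cmod (G (fst (- y)) (snd (- y))))"]
    by simp
  finally show ?thesis .
qed

lemma nn_integral_count_space_abs_le:
  fixes h :: "int \<Rightarrow> real"
  assumes "\<And>a. 0 \<le> h a"
  shows "(\<integral>\<^sup>+a. ennreal (if \<bar>a\<bar> \<le> \<bar>N\<bar> then h a else 0) \<partial>count_space UNIV) = ennreal (\<Sum>a\<in>{-\<bar>N\<bar>..\<bar>N\<bar>}. h a)"
proof -
  have "(\<integral>\<^sup>+a. ennreal (if \<bar>a\<bar> \<le> \<bar>N\<bar> then h a else 0) \<partial>count_space UNIV)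
      = (\<integral>\<^sup>+a. ennreal (h a) \<partial>count_space {-\<bar>N\<bar>..\<bar>N\<bar>})"
    by (subst nn_integral_count_space_indicator) (auto intro!: nn_integral_cong simp: indicator_def abs_le_iff)
  also have "\<dots> = ennreal (\<Sum>a\<in>{-\<bar>N\<bar>..\<bar>N\<bar>}. h a)"
    using assms by (simp add: nn_integral_count_space_finite sum_ennreal)
  finally show ?thesis .
qed

definition xper_density :: "real \<Rightarrow> real \<Rightarrow> (int \<Rightarrow> real \<Rightarrow> complex) \<Rightarrow> int \<times> real \<Rightarrow> ennreal" where
  "xper_density k b F x = ennreal (xper_weight k b x * cmod (F (fst x) (snd x)))"

text \<open>\<open>\<widehat>u(x + y) \<widehat>w(y)\<close> is split according to whether the spatial frequency of \<open>u\<close> or of \<open>w\<close>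
  dominates; the kernels undo the \<open>X\<^sup>k\<^sup>,\<^sup>b\<close> weights of both factors.\<close>
definition kernel_low :: "real \<Rightarrow> real \<Rightarrow> int \<times> real \<Rightarrow> int \<times> real \<Rightarrow> ennreal" where
  "kernel_low k b x y = ennreal (if \<bar>fst (x + y)\<bar> \<le> \<bar>fst y\<bar> then 1 / (xper_weight k b (x + y) * xper_weight k b y) else 0)"

definition kernel_high :: "real \<Rightarrow> real \<Rightarrow> int \<times> real \<Rightarrow> int \<times> real \<Rightarrow> ennreal" where
  "kernel_high k b x y = ennreal (if \<bar>fst (x + y)\<bar> \<le> \<bar>fst y\<bar> then 0 else 1 / (xper_weight k b (x + y) * xper_weight k b y))"

lemma measurable_xper_density[measurable]:
  assumes "\<And>n. F n \<in> borel_measurable lborel"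
  shows "xper_density k b F \<in> borel_measurable freq_measure"
proof -
  have [measurable]: "(\<lambda>x. F (fst x) (snd x)) \<in> borel_measurable freq_measure"
    using assms by (rule measurable_freq_measure_curried)
  show ?thesis
    unfolding xper_density_def by measurable
qed

lemma measurable_kernel_low[measurable]:
  "case_prod (kernel_low k b) \<in> borel_measurable (freq_measure \<Otimes>\<^sub>M freq_measure)"
  unfolding kernel_low_def by measurable

lemma measurable_kernel_high[measurable]:
  "case_prod (kernel_high k b) \<in> borel_measurable (freq_measure \<Otimes>\<^sub>M freq_measure)"
  unfolding kernel_high_def by measurable

lemma Xper_sq_eq_nn_integral:
  assumes "\<And>n. F n \<in> borel_measurable lborel"
  shows "Xper_sq k b F = (\<integral>\<^sup>+x. (xper_density k b F x)\<^sup>2 \<partial>freq_measure)"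
proof -
  have "(xper_density k b F x)\<^sup>2
      = ennreal (jb (of_int (fst x)) powr (2 * k) * jb (snd x + (of_int (fst x))\<^sup>2) powr (2 * b) * (cmod (F (fst x) (snd x)))\<^sup>2)"
    for x
    using xper_weight_pos[of k b x]
    by (simp add: xper_density_def ennreal_power power_mult_distrib xper_weight_sq)
  moreover have "(\<lambda>x. (xper_density k b F x)\<^sup>2) \<in> borel_measurable freq_measure"
    using assms by measurable
  ultimately show ?thesis
    by (simp add: Xper_sq_def nn_integral_freq_measure)
qed

lemma norm_prod_conj_hat_le_kernels:
  assumes [measurable]: "\<And>n. F n \<in> borel_measurable lborel" "\<And>n. G n \<in> borel_measurable lborel"
  shows "ennreal (cmod (prod_conj_hat F G (fst x) (snd x)))
    \<le> kernel_correlation (xper_density k b F) (xper_density k b G) (kernel_low k b) x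
      + kernel_correlation (xper_density k b F) (xper_density k b G) (kernel_high k b) x"
proof -
  have "ennreal (cmod (F (fst (x + y)) (snd (x + y))) * cmod (G (fst y) (snd y)))
      = xper_density k b F (x + y) * xper_density k b G y * kernel_low k b x y
        + xper_density k b F (x + y) * xper_density k b G y * kernel_high k b x y" for y
    using xper_weight_pos[of k b "x + y"] xper_weight_pos[of k b y]
    by (simp add: xper_density_def kernel_low_def kernel_high_def ennreal_mult[symmetric])
  then show ?thesis
    using norm_prod_conj_hat_le[of F G x] by (simp add: kernel_correlation_def nn_integral_add)
qed

definition schur_kernel :: "real \<Rightarrow> real \<Rightarrow> real \<Rightarrow> real \<Rightarrow> int \<times> real \<Rightarrow> int \<times> real \<Rightarrow> real" where
  "schur_kernel s b k b' d x = (if \<bar>fst x\<bar> \<le> \<bar>fst d\<bar>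
    then hh_weight s b (x - d) / (xper_weight k b' x * xper_weight k b' d)\<^sup>2 else 0)"

lemma measurable_schur_kernel[measurable]: "schur_kernel s b k b' d \<in> borel_measurable freq_measure"
  unfolding schur_kernel_def by measurable

lemma schur_kernel_eq:
  assumes "2 * b = - p" "2 * b' = q" "\<bar>fst x\<bar> \<le> \<bar>fst d\<bar>"
  shows "schur_kernel s b k b' d x
    = jb (of_int (fst x - fst d)) powr (2 * s) * jb (snd x - snd d) powr (-p)
      * (jb (of_int (fst x)) powr (-2 * k) * jb (snd x + (of_int (fst x))\<^sup>2) powr (-q))
      * (jb (of_int (fst d)) powr (-2 * k) * jb (snd d + (of_int (fst d))\<^sup>2) powr (-q))"
proof -
  have "hh_weight s b (x - d) / (xper_weight k b' x * xper_weight k b' d)\<^sup>2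
      = hh_weight s b (x - d) * (1 / (xper_weight k b' x)\<^sup>2) * (1 / (xper_weight k b' d)\<^sup>2)"
    by (simp add: power_mult_distrib)
  then show ?thesis
    using assms by (simp only: schur_kernel_def if_True inverse_xper_weight_sq) (simp add: hh_weight_def)
qed

lemma kernel_weight_le:
  fixes s k p q \<delta> :: real and a A :: int
  assumes s: "0 \<le> s" and pq: "0 \<le> p" "p \<le> q" and a: "\<bar>a\<bar> \<le> \<bar>A\<bar>"
  shows "jb (of_int (a - A)) powr (2 * s) * jb (of_int a) powr (-2 * k)
      * (jb (of_int A) powr (-2 * k) * jb (\<delta> + (of_int A)\<^sup>2) powr (-q)) * jb (\<delta> + (of_int a)\<^sup>2) powr (-p)
    \<le> 2 powr (2 * s) * (jb (of_int A) powr (2 * s - 2 * k)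
      * (jb (of_int a) powr (-2 * k) * jb ((of_int A)\<^sup>2 - (of_int a)\<^sup>2) powr (-p)))"
proof -
  have freq: "jb (of_int (a - A)) powr (2 * s) \<le> 2 powr (2 * s) * jb (of_int A) powr (2 * s)"
    using s a by (intro jb_powr_le_double) auto
  have resonance: "jb (\<delta> + (of_int A)\<^sup>2) powr (-q) * jb (\<delta> + (of_int a)\<^sup>2) powr (-p)
      \<le> jb ((of_int A)\<^sup>2 - (of_int a)\<^sup>2) powr (-p)"
    using jb_powr_mult_le_jb_diff[OF pq, of "\<delta> + (of_int A)\<^sup>2" "\<delta> + (of_int a)\<^sup>2"] by simp
  have "jb (of_int (a - A)) powr (2 * s) * jb (of_int a) powr (-2 * k)
      * (jb (of_int A) powr (-2 * k) * jb (\<delta> + (of_int A)\<^sup>2) powr (-q)) * jb (\<delta> + (of_int a)\<^sup>2) powr (-p)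
    = jb (of_int A) powr (-2 * k) * jb (of_int a) powr (-2 * k)
      * (jb (of_int (a - A)) powr (2 * s) * (jb (\<delta> + (of_int A)\<^sup>2) powr (-q) * jb (\<delta> + (of_int a)\<^sup>2) powr (-p)))"
    by (simp add: mult_ac)
  also have "\<dots> \<le> jb (of_int A) powr (-2 * k) * jb (of_int a) powr (-2 * k)
      * ((2 powr (2 * s) * jb (of_int A) powr (2 * s)) * jb ((of_int A)\<^sup>2 - (of_int a)\<^sup>2) powr (-p))"
    by (intro mult_left_mono mult_mono freq resonance) simp_all
  also have "\<dots> = 2 powr (2 * s) * (jb (of_int A) powr (2 * s - 2 * k)
      * (jb (of_int a) powr (-2 * k) * jb ((of_int A)\<^sup>2 - (of_int a)\<^sup>2) powr (-p)))"
    by (simp add: powr_diff powr_minus_divide field_simps)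
  finally show ?thesis .
qed

lemma nn_integral_schur_kernel_slice_le:
  fixes s b k b' p q :: real and a :: int and d :: "int \<times> real"
  assumes s: "0 \<le> s" and b: "2 * b = - p" "2 * b' = q" and pq: "0 \<le> p" "p \<le> q" "1 < q"
  defines "A \<equiv> fst d"
  shows "(\<integral>\<^sup>+\<beta>. ennreal (schur_kernel s b k b' d (a, \<beta>)) \<partial>lborel)
    \<le> ennreal (2 powr (2 * s) * (2 powr q * (4 / (q - 1))) * (if \<bar>a\<bar> \<le> \<bar>A\<bar>
      then jb (of_int A) powr (2 * s - 2 * k) * (jb (of_int a) powr (-2 * k) * jb ((of_int A)\<^sup>2 - (of_int a)\<^sup>2) powr (-p))
      else 0))"
    (is "_ \<le> ennreal (?S * ?C * ?H)")
proof (cases "\<bar>a\<bar> \<le> \<bar>A\<bar>")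
  case True
  define \<delta> where "\<delta> = snd d"
  define c where "c = jb (of_int (a - A)) powr (2 * s) * jb (of_int a) powr (-2 * k)
    * (jb (of_int A) powr (-2 * k) * jb (\<delta> + (of_int A)\<^sup>2) powr (-q))"
  have c: "0 \<le> c" and C: "0 \<le> ?C"
    using pq by (simp_all add: c_def)
  have "(\<integral>\<^sup>+\<beta>. ennreal (schur_kernel s b k b' d (a, \<beta>)) \<partial>lborel)
    = (\<integral>\<^sup>+\<beta>. ennreal c * ennreal (jb (\<beta> - \<delta>) powr (-p) * jb (\<beta> + (of_int a)\<^sup>2) powr (-q)) \<partial>lborel)"
    using c True schur_kernel_eq[OF b, of "(a, _)" d s k]
    by (intro nn_integral_cong) (simp add: A_def \<delta>_def c_def ennreal_mult[symmetric] mult_ac)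
  also have "\<dots> = ennreal c * (\<integral>\<^sup>+\<beta>. ennreal (jb (\<beta> - \<delta>) powr (-p) * jb (\<beta> + (of_int a)\<^sup>2) powr (-q)) \<partial>lborel)"
    by (simp add: nn_integral_cmult)
  also have "\<dots> \<le> ennreal c * ennreal (?C * jb (- \<delta> - (of_int a)\<^sup>2) powr (-p))"
    using nn_integral_jb_powr_mult_le[OF pq, of "- \<delta>" "(of_int a)\<^sup>2"] by (intro mult_left_mono) simp_all
  also have "\<dots> = ennreal (?C * (c * jb (\<delta> + (of_int a)\<^sup>2) powr (-p)))"
    using c jb_minus[of "\<delta> + (of_int a)\<^sup>2"] by (simp add: ennreal_mult'[symmetric] mult_ac)
  also have "\<dots> \<le> ennreal (?C * (?S * ?H))"
    using kernel_weight_le[OF s pq(1,2) True, of k \<delta>] C True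
    by (intro ennreal_leI mult_left_mono) (simp_all add: c_def)
  finally show ?thesis
    by (simp add: mult_ac)
qed (simp add: schur_kernel_def A_def)

lemma nn_integral_schur_kernel_le:
  fixes s b k b' p q L :: real and d :: "int \<times> real"
  assumes s: "0 \<le> s" and b: "2 * b = - p" "2 * b' = q" and pq: "0 \<le> p" "p \<le> q" "1 < q"
    and L: "\<And>N::int. jb (of_int N) powr (2 * s - 2 * k)
      * (\<Sum>a\<in>{-\<bar>N\<bar>..\<bar>N\<bar>}. jb (of_int a) powr (-2 * k) * jb ((of_int N)\<^sup>2 - (of_int a)\<^sup>2) powr (-p)) \<le> L"
  shows "(\<integral>\<^sup>+x. ennreal (schur_kernel s b k b' d x) \<partial>freq_measure)
    \<le> ennreal (2 powr (2 * s) * (2 powr q * (4 / (q - 1))) * L)"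
proof -
  let ?A = "fst d" and ?c = "2 powr (2 * s) * (2 powr q * (4 / (q - 1)))"
  define h where "h a = jb (of_int ?A) powr (2 * s - 2 * k)
    * (jb (of_int a) powr (-2 * k) * jb ((of_int ?A)\<^sup>2 - (of_int a)\<^sup>2) powr (-p))" for a :: int
  have h: "0 \<le> h a" for a
    by (simp add: h_def)
  have c: "0 \<le> ?c"
    using pq by simp
  have "(\<integral>\<^sup>+x. ennreal (schur_kernel s b k b' d x) \<partial>freq_measure)
      = (\<integral>\<^sup>+a. \<integral>\<^sup>+\<beta>. ennreal (schur_kernel s b k b' d (a, \<beta>)) \<partial>lborel \<partial>count_space UNIV)"
    by (rule nn_integral_freq_measure) measurable
  also have "\<dots> \<le> (\<integral>\<^sup>+a. ennreal ?c * ennreal (if \<bar>a\<bar> \<le> \<bar>?A\<bar> then h a else 0) \<partial>count_space UNIV)"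
  proof (intro nn_integral_mono)
    fix a :: int
    have "ennreal ?c * ennreal (if \<bar>a\<bar> \<le> \<bar>?A\<bar> then h a else 0) = ennreal (?c * (if \<bar>a\<bar> \<le> \<bar>?A\<bar> then h a else 0))"
      using c by (rule ennreal_mult'[symmetric])
    then show "(\<integral>\<^sup>+\<beta>. ennreal (schur_kernel s b k b' d (a, \<beta>)) \<partial>lborel)
        \<le> ennreal ?c * ennreal (if \<bar>a\<bar> \<le> \<bar>?A\<bar> then h a else 0)"
      unfolding h_def by (simp only:) (rule nn_integral_schur_kernel_slice_le[OF s b pq])
  qed
  also have "\<dots> = ennreal ?c * ennreal (\<Sum>a\<in>{-\<bar>?A\<bar>..\<bar>?A\<bar>}. h a)"
    using h by (simp add: nn_integral_cmult nn_integral_count_space_abs_le)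
  also have "\<dots> \<le> ennreal ?c * ennreal L"
    using L[of ?A] by (intro mult_left_mono ennreal_leI) (simp_all add: h_def sum_distrib_left)
  also have "\<dots> = ennreal (?c * L)"
    using c by (rule ennreal_mult'[symmetric])
  finally show ?thesis
    by (simp add: mult_ac)
qed

lemma nn_integral_kernel_low_le:
  assumes kernel: "\<And>d. (\<integral>\<^sup>+x. ennreal (schur_kernel s b k b' d x) \<partial>freq_measure) \<le> K"
  shows "(\<integral>\<^sup>+x. ennreal (hh_weight s b x) * (kernel_low k b' x y)\<^sup>2 \<partial>freq_measure) \<le> K"
proof -
  define g where "g u = ennreal (schur_kernel s b k b' y u)" for u
  have "(\<integral>\<^sup>+x. ennreal (hh_weight s b x) * (kernel_low k b' x y)\<^sup>2 \<partial>freq_measure)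
      = (\<integral>\<^sup>+x. g (y + x) \<partial>freq_measure)"
    by (intro nn_integral_cong)
      (simp add: g_def schur_kernel_def kernel_low_def hh_weight_nonneg xper_weight_nonneg ennreal_power ennreal_mult'[symmetric]
        power_divide add.commute)
  also have "\<dots> = (\<integral>\<^sup>+x. g x \<partial>freq_measure)"
    by (rule nn_integral_freq_translate) (simp add: g_def)
  finally show ?thesis
    using kernel[of y] by (simp add: g_def)
qed

lemma nn_integral_kernel_high_le:
  assumes kernel: "\<And>d. (\<integral>\<^sup>+x. ennreal (schur_kernel s b k b' d x) \<partial>freq_measure) \<le> K"
  shows "(\<integral>\<^sup>+x. ennreal (hh_weight s b x) * (kernel_high k b' x (z - x))\<^sup>2 \<partial>freq_measure) \<le> K"
proof -
  define g where "g u = ennreal (schur_kernel s b k b' z u)" for u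
  have [measurable]: "g \<in> borel_measurable freq_measure"
    unfolding g_def by measurable
  have "(\<integral>\<^sup>+x. ennreal (hh_weight s b x) * (kernel_high k b' x (z - x))\<^sup>2 \<partial>freq_measure)
      \<le> (\<integral>\<^sup>+x. g (z + - x) \<partial>freq_measure)"
    using hh_weight_minus[of s b]
    by (intro nn_integral_mono)
      (simp add: g_def schur_kernel_def kernel_high_def hh_weight_nonneg xper_weight_nonneg ennreal_power ennreal_mult'[symmetric]
        power_divide mult.commute)
  also have "\<dots> = (\<integral>\<^sup>+x. g x \<partial>freq_measure)"
    using nn_integral_freq_reflect[of "\<lambda>x. g (z + x)"] nn_integral_freq_translate[of g z] by simp
  finally show ?thesis
    using kernel[of z] by (simp add: g_def)
qed

lemma ennreal_add_sq_le: "((a::ennreal) + b)\<^sup>2 \<le> 2 * a\<^sup>2 + 2 * b\<^sup>2"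
proof (cases a; cases b)
  fix x y :: real assume xy: "a = ennreal x" "b = ennreal y" "0 \<le> x" "0 \<le> y"
  have "(x + y)\<^sup>2 \<le> 2 * x\<^sup>2 + 2 * y\<^sup>2"
    using zero_le_power2[of "x - y"] by (simp add: power2_eq_square algebra_simps)
  have "(a + b)\<^sup>2 = ennreal ((x + y)\<^sup>2)"
    using xy by (simp add: ennreal_power[symmetric])
  also have "\<dots> \<le> ennreal (2 * x\<^sup>2 + 2 * y\<^sup>2)"
    by (rule ennreal_leI) fact
  also have "\<dots> = 2 * a\<^sup>2 + 2 * b\<^sup>2"
    using xy by (simp add: ennreal_mult ennreal_power[symmetric])
  finally show ?thesis .
qed (simp_all add: power2_eq_square)

lemma HH_sq_prod_conj_hat_le_correlations:
  fixes F G :: "int \<Rightarrow> real \<Rightarrow> complex" and k b' :: real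
  assumes F[measurable]: "\<And>n. F n \<in> borel_measurable lborel"
    and G[measurable]: "\<And>n. G n \<in> borel_measurable lborel"
  defines "E \<kappa> \<equiv> kernel_correlation (xper_density k b' F) (xper_density k b' G) \<kappa>"
  shows "HH_sq b s (prod_conj_hat F G)
    \<le> 2 * (\<integral>\<^sup>+x. ennreal (hh_weight s b x) * (E (kernel_low k b') x)\<^sup>2 \<partial>freq_measure)
      + 2 * (\<integral>\<^sup>+x. ennreal (hh_weight s b x) * (E (kernel_high k b') x)\<^sup>2 \<partial>freq_measure)"
proof -
  let ?W = "\<lambda>x. ennreal (hh_weight s b x)"
  let ?bound = "\<lambda>x. 2 * (?W x * (E (kernel_low k b') x)\<^sup>2) + 2 * (?W x * (E (kernel_high k b') x)\<^sup>2)"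
  have measurable: "?bound \<in> borel_measurable freq_measure"
    unfolding E_def by measurable
  have "ennreal (jb (of_int n) powr (2 * s) * jb \<tau> powr (2 * b) * (cmod (prod_conj_hat F G n \<tau>))\<^sup>2)
      \<le> ?bound (n, \<tau>)" for n \<tau>
  proof -
    let ?x = "(n, \<tau>)"
    have "ennreal (jb (of_int n) powr (2 * s) * jb \<tau> powr (2 * b) * (cmod (prod_conj_hat F G n \<tau>))\<^sup>2)
        = ?W ?x * (ennreal (cmod (prod_conj_hat F G n \<tau>)))\<^sup>2"
      by (simp add: hh_weight_def ennreal_mult ennreal_power)
    also have "\<dots> \<le> ?W ?x * (E (kernel_low k b') ?x + E (kernel_high k b') ?x)\<^sup>2"
      using norm_prod_conj_hat_le_kernels[OF F G, where x = ?x and k = k and b = b']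
      by (intro mult_left_mono power_mono) (simp_all add: E_def)
    also have "\<dots> \<le> ?W ?x * (2 * (E (kernel_low k b') ?x)\<^sup>2 + 2 * (E (kernel_high k b') ?x)\<^sup>2)"
      by (intro mult_left_mono ennreal_add_sq_le) simp
    finally show ?thesis
      by (simp add: distrib_left mult_ac)
  qed
  then have "HH_sq b s (prod_conj_hat F G) \<le> (\<integral>\<^sup>+n. \<integral>\<^sup>+\<tau>. ?bound (n, \<tau>) \<partial>lborel \<partial>count_space UNIV)"
    unfolding HH_sq_def by (intro nn_integral_mono) simp
  also have "\<dots> = (\<integral>\<^sup>+x. ?bound x \<partial>freq_measure)"
    by (simp only: nn_integral_freq_measure[OF measurable])
  also have "\<dots> = 2 * (\<integral>\<^sup>+x. ?W x * (E (kernel_low k b') x)\<^sup>2 \<partial>freq_measure)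
      + 2 * (\<integral>\<^sup>+x. ?W x * (E (kernel_high k b') x)\<^sup>2 \<partial>freq_measure)"
    unfolding E_def by (simp add: nn_integral_add nn_integral_cmult)
  finally show ?thesis .
qed

lemma HH_sq_prod_conj_hat_le:
  fixes F G :: "int \<Rightarrow> real \<Rightarrow> complex" and K :: ennreal
  assumes F[measurable]: "\<And>n. F n \<in> borel_measurable lborel"
    and G[measurable]: "\<And>n. G n \<in> borel_measurable lborel"
    and kernel: "\<And>d. (\<integral>\<^sup>+x. ennreal (schur_kernel s b k b' d x) \<partial>freq_measure) \<le> K"
  shows "HH_sq b s (prod_conj_hat F G) \<le> 4 * K * Xper_sq k b' F * Xper_sq k b' G"
proof -
  let ?E = "kernel_correlation (xper_density k b' F) (xper_density k b' G)"
  have "(\<integral>\<^sup>+x. ennreal (hh_weight s b x) * (?E (kernel_low k b') x)\<^sup>2 \<partial>freq_measure)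
      \<le> K * Xper_sq k b' F * Xper_sq k b' G"
    unfolding Xper_sq_eq_nn_integral[OF F] Xper_sq_eq_nn_integral[OF G]
    by (rule nn_integral_correlation_sq_le, measurable) (rule nn_integral_kernel_low_le[OF kernel])
  moreover have "(\<integral>\<^sup>+x. ennreal (hh_weight s b x) * (?E (kernel_high k b') x)\<^sup>2 \<partial>freq_measure)
      \<le> K * Xper_sq k b' F * Xper_sq k b' G"
    unfolding Xper_sq_eq_nn_integral[OF F] Xper_sq_eq_nn_integral[OF G]
    by (rule nn_integral_correlation_sq_le_antidiagonal, measurable) (rule nn_integral_kernel_high_le[OF kernel])
  ultimately have "HH_sq b s (prod_conj_hat F G)
      \<le> 2 * (K * Xper_sq k b' F * Xper_sq k b' G) + 2 * (K * Xper_sq k b' F * Xper_sq k b' G)"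
    using HH_sq_prod_conj_hat_le_correlations[of F G b s k b', OF F G]
    by (elim order_trans) (intro add_mono mult_left_mono; simp)
  also have "\<dots> = 4 * K * Xper_sq k b' F * Xper_sq k b' G"
    by (simp add: mult.assoc flip: distrib_right)
  finally show ?thesis .
qed

lemma HH_sq_prod_conj_hat_bounded:
  fixes k s \<eta> :: real
  assumes s: "0 \<le> s" "s \<le> 2 * k" and \<eta>: "0 < \<eta>" "\<eta> \<le> 1/4" "2 * \<eta> < 1 - (s - k)"
  shows "\<exists>C. \<forall>F G. (\<forall>n. F n \<in> borel_measurable lborel) \<longrightarrow> (\<forall>n. G n \<in> borel_measurable lborel) \<longrightarrow>
    HH_sq (-1/2 + \<eta>) s (prod_conj_hat F G) \<le> ennreal (C\<^sup>2) * Xper_sq k (1/2 + \<eta>) F * Xper_sq k (1/2 + \<eta>) G"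
proof -
  define p q where "p = 1 - 2 * \<eta>" and "q = 1 + 2 * \<eta>"
  obtain L where L: "\<And>N::int. jb (of_int N) powr (2 * s - 2 * k)
      * (\<Sum>a\<in>{-\<bar>N\<bar>..\<bar>N\<bar>}. jb (of_int a) powr (-2 * k) * jb ((of_int N)\<^sup>2 - (of_int a)\<^sup>2) powr (-p)) \<le> L"
    using weighted_resonance_sum_bounded[of s k p] s \<eta> by (auto simp: p_def)
  define K where "K = 2 powr (2 * s) * (2 powr q * (4 / (q - 1))) * L"
  have "(\<integral>\<^sup>+x. ennreal (schur_kernel s (-1/2 + \<eta>) k (1/2 + \<eta>) d x) \<partial>freq_measure) \<le> ennreal K" for d
    unfolding K_def using \<eta> by (intro nn_integral_schur_kernel_le[OF s(1) _ _ _ _ _ L]) (auto simp: p_def q_def)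
  \<comment> \<open>\<open>\<bar>K\<bar>\<close> spares us proving \<open>0 \<le> L\<close>\<close>
  then have "HH_sq (-1/2 + \<eta>) s (prod_conj_hat F G)
      \<le> ennreal ((sqrt (4 * \<bar>K\<bar>))\<^sup>2) * Xper_sq k (1/2 + \<eta>) F * Xper_sq k (1/2 + \<eta>) G"
    if "\<forall>n. F n \<in> borel_measurable lborel" "\<forall>n. G n \<in> borel_measurable lborel" for F G
    using HH_sq_prod_conj_hat_le[of F G s "-1/2 + \<eta>" k "1/2 + \<eta>" "ennreal K"] that
      ennreal_mult'[of 4 K, symmetric]
    by (auto elim!: order_trans intro!: mult_right_mono ennreal_leI)
  then show ?thesis
    by blast
qed

theorem proposition4p2:
  fixes k s :: real
  assumes "0 \<le> s" and "s \<le> 2 * k" and "\<bar>k - s\<bar> < 1"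
  shows "\<exists>\<eta>0>0. \<forall>\<eta>. 0 < \<eta> \<and> \<eta> < \<eta>0 \<longrightarrow>
    (\<exists>C::real. \<forall>F G :: int \<Rightarrow> real \<Rightarrow> complex.
       (\<forall>n. F n \<in> borel_measurable lborel) \<longrightarrow> (\<forall>n. G n \<in> borel_measurable lborel) \<longrightarrow>
       Xper_sq k (1/2 + \<eta>) F < \<infinity> \<longrightarrow> Xper_sq k (1/2 + \<eta>) G < \<infinity> \<longrightarrow>
       HH_sq (-1/2 + \<eta>) s (prod_conj_hat F G)
         \<le> ennreal (C^2) * Xper_sq k (1/2 + \<eta>) F * Xper_sq k (1/2 + \<eta>) G)"
proof (rule exI[of _ "min (1/4) ((1 - (s - k)) / 2)"], intro conjI allI impI)
  show "0 < min (1/4) ((1 - (s - k)) / 2)"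
    using assms by simp
next
  fix \<eta> :: real
  assume "0 < \<eta> \<and> \<eta> < min (1/4) ((1 - (s - k)) / 2)"
  then obtain C where "\<forall>F G. (\<forall>n. F n \<in> borel_measurable lborel) \<longrightarrow> (\<forall>n. G n \<in> borel_measurable lborel) \<longrightarrow>
      HH_sq (-1/2 + \<eta>) s (prod_conj_hat F G) \<le> ennreal (C\<^sup>2) * Xper_sq k (1/2 + \<eta>) F * Xper_sq k (1/2 + \<eta>) G"
    using HH_sq_prod_conj_hat_bounded[OF assms(1,2), of \<eta>] by auto
  then show "\<exists>C::real. \<forall>F G :: int \<Rightarrow> real \<Rightarrow> complex.
      (\<forall>n. F n \<in> borel_measurable lborel) \<longrightarrow> (\<forall>n. G n \<in> borel_measurable lborel) \<longrightarrow>
      Xper_sq k (1/2 + \<eta>) F < \<infinity> \<longrightarrow> Xper_sq k (1/2 + \<eta>) G < \<infinity> \<longrightarrow>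
      HH_sq (-1/2 + \<eta>) s (prod_conj_hat F G) \<le> ennreal (C^2) * Xper_sq k (1/2 + \<eta>) F * Xper_sq k (1/2 + \<eta>) G"
    by blast
qed

end
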